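(* Let $\ell\ge1$, $2n=\ell(\ell+1)$, and fix integers $k\ge1$ and $N\ge1$ independent of $\ell$, with $2k\le\ell+1$. Let $Y^{(1)},\dots,Y^{(N)}$ be independent, each uniformly random among all ordered partitions of $[2n]$ into $\ell+1$ subsets of size $\ell$. Then the probability $P_N$ that some $S\in\mathcal S_{2k}$ is generated by none of $Y^{(1)},\dots,Y^{(N)}$ satisfies $P_N\le\binom{2n}{2k}P(S)^N$ and $P_N=\mathcal O(\ell^{4k-N})$ as $\ell\to\infty$; in particular $P_N\to0$ whenever $N>4k$.
   Context: $\mathcal S_{2k}=\{S\subseteq[2n]:|S|=2k\}$. A set $S$ is generated from a partition $Y=(Y_1,\dots,Y_{\ell+1})$ if no two elements of $S$ lie in the same $Y_i$. $P(S)=1-\ell^{2k}\binom{\ell+1}{2k}\binom{2n}{2k}^{-1}$ is the probability that a fixed $S$ is not generated by one uniformly random partition. *)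

theory Defs
  imports "HOL-Probability.Probability" "HOL-Library.Landau_Symbols"
begin

text \<open>Ground set [2n] with 2n = l(l+1), realised as {1..l*(l+1)}.\<close>

text \<open>Blocks are indexed by 0..l; the function is fixed to be empty outside the index range
  so that the set of ordered partitions is finite.\<close>
definition ordered_partitions :: "nat \<Rightarrow> (nat \<Rightarrow> nat set) set" where
  "ordered_partitions l =
    {Y. (\<forall>i<l+1. card (Y i) = l) \<and>
        (\<forall>i<l+1. \<forall>j<l+1. i \<noteq> j \<longrightarrow> Y i \<inter> Y j = {}) \<and>
        (\<Union>i<l+1. Y i) = {1..l*(l+1)} \<and>
        (\<forall>i. l+1 \<le> i \<longrightarrow> Y i = {})}"

definition generated_by :: "nat \<Rightarrow> (nat \<Rightarrow> nat set) \<Rightarrow> nat set \<Rightarrow> bool" where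
  "generated_by l Y S \<longleftrightarrow> (\<forall>i<l+1. \<forall>x\<in>S. \<forall>y\<in>S. x \<in> Y i \<longrightarrow> y \<in> Y i \<longrightarrow> x = y)"

definition subsets_2k :: "nat \<Rightarrow> nat \<Rightarrow> nat set set" where
  "subsets_2k l k = {S. S \<subseteq> {1..l*(l+1)} \<and> card S = 2*k}"

definition P_single :: "nat \<Rightarrow> nat \<Rightarrow> real" where
  "P_single l k = 1 - real l ^ (2*k) * real ((l+1) choose (2*k)) / real ((l*(l+1)) choose (2*k))"

definition partitions_pmf :: "nat \<Rightarrow> nat \<Rightarrow> (nat \<Rightarrow> nat \<Rightarrow> nat set) pmf" where
  "partitions_pmf l N = Pi_pmf {..<N} (\<lambda>_. {}) (\<lambda>_. pmf_of_set (ordered_partitions l))"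

definition P_N :: "nat \<Rightarrow> nat \<Rightarrow> nat \<Rightarrow> real" where
  "P_N l k N = measure_pmf.prob (partitions_pmf l N)
     {Ys. \<exists>S\<in>subsets_2k l k. \<forall>j<N. \<not> generated_by l (Ys j) S}"

end

theory Submission
  imports Defs
begin

text \<open>
  Fix a 2k-set S. Relabelling the ground set by a permutation that carries S to another 2k-set
  shows that the number of ordered partitions generating S does not depend on S; double counting
  pairs (S, Y) with Y generating S, against the l^{2k} binom(l+1, 2k) sets generated by each
  partition, shows that one uniform partition generates S with probability exactly 1 - P(S).
  Independence and the union bound over the binom(2n, 2k) candidate sets give the first claim.
  For the asymptotics, P(S) = 1 - \<Prod>_{i<2k} l(l+1-i)/(l(l+1)-i) \<le> (2k)^2/l by Bernoulli's
  inequality, while binom(2n, 2k) \<le> (2l^2)^{2k}; hence P_N = O(l^{4k} l^{-N}).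
\<close>

lemma ordered_partition_card: "Y \<in> ordered_partitions l \<Longrightarrow> i < l+1 \<Longrightarrow> card (Y i) = l"
  by (simp add: ordered_partitions_def)

lemma ordered_partition_disjoint: "Y \<in> ordered_partitions l \<Longrightarrow> disjoint_family_on Y {..<l+1}"
  by (simp add: ordered_partitions_def disjoint_family_on_def)

lemma ordered_partition_Union: "Y \<in> ordered_partitions l \<Longrightarrow> (\<Union>i<l+1. Y i) = {1..l*(l+1)}"
  by (simp add: ordered_partitions_def)

lemma ordered_partition_subset:
  assumes "Y \<in> ordered_partitions l"
  shows "Y i \<subseteq> {1..l*(l+1)}"
proof (cases "i < l+1")
  case True
  then show ?thesis using ordered_partition_Union[OF assms] by blast
next
  case False
  then show ?thesis using assms by (simp add: ordered_partitions_def)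
qed

lemma finite_ordered_partitions: "finite (ordered_partitions l)"
proof (rule finite_subset)
  show "ordered_partitions l \<subseteq>
      {Y. \<forall>i. (i \<in> {..<l+1} \<longrightarrow> Y i \<in> Pow {1..l*(l+1)}) \<and> (i \<notin> {..<l+1} \<longrightarrow> Y i = {})}"
    using ordered_partition_subset by (auto simp: ordered_partitions_def)
qed (intro finite_set_of_finite_funs; simp)

lemma Union_consecutive_blocks: "(\<Union>i<m. {i*l<..(i+1)*l}) = {0<..m*l :: nat}"
proof (induction m)
  case (Suc m)
  have "{0<..m*l} \<union> {m*l<..(m+1)*l} = {0<..(m+1)*l}" by (auto simp: ivl_disj_un)
  then show ?case using Suc by (simp add: lessThan_Suc Un_commute)
qed simp

lemma ordered_partitions_nonempty: "ordered_partitions l \<noteq> {}"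
proof -
  define Y where "Y i = (if i < l+1 then {i*l<..(i+1)*l} else {})" for i
  have disjoint: "disjoint_family_on Y {..<l+1}"
  proof -
    have "Y i \<inter> Y j = {}" if "i < j" for i j
    proof -
      have "(i+1)*l \<le> j*l" using that by (intro mult_right_mono) auto
      then show ?thesis by (auto simp: Y_def)
    qed
    then show ?thesis
      unfolding disjoint_family_on_def by (metis Int_commute linorder_neqE_nat)
  qed
  have "(\<Union>i<l+1. Y i) = (\<Union>i<l+1. {i*l<..(i+1)*l})"
    by (simp add: Y_def)
  also have "\<dots> = {0<..(l+1)*l}"
    by (rule Union_consecutive_blocks)
  also have "\<dots> = {1..l*(l+1)}"
    by (metis One_nat_def atLeastSucAtMost_greaterThanAtMost mult.commute)
  finally have "Y \<in> ordered_partitions l"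
    using disjoint by (simp add: ordered_partitions_def Y_def disjoint_family_on_def)
  then show ?thesis by blast
qed

section \<open>Counting partial transversals\<close>

definition partial_transversal :: "('i \<Rightarrow> 'a set) \<Rightarrow> 'i set \<Rightarrow> 'a set \<Rightarrow> bool" where
  "partial_transversal Y A S \<longleftrightarrow>
     S \<subseteq> (\<Union>i\<in>A. Y i) \<and> (\<forall>i\<in>A. \<forall>x\<in>S. \<forall>y\<in>S. x \<in> Y i \<longrightarrow> y \<in> Y i \<longrightarrow> x = y)"

lemma disjoint_family_on_index_unique:
  "disjoint_family_on Y A \<Longrightarrow> i \<in> A \<Longrightarrow> j \<in> A \<Longrightarrow> x \<in> Y i \<Longrightarrow> x \<in> Y j \<Longrightarrow> i = j"
  unfolding disjoint_family_on_def by blast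

lemma inj_on_section:
  assumes "disjoint_family_on Y A" "I \<subseteq> A" "f \<in> PiE I Y"
  shows "inj_on f I"
proof (rule inj_onI)
  fix i j assume ij: "i \<in> I" "j \<in> I" "f i = f j"
  have "f i \<in> Y i" "f j \<in> Y j" using PiE_mem[OF assms(3)] ij(1,2) by auto
  then show "i = j"
    using disjoint_family_on_index_unique[OF assms(1)] ij assms(2) by (metis subsetD)
qed

lemma partial_transversal_image_section:
  assumes "disjoint_family_on Y A" "I \<subseteq> A" "f \<in> PiE I Y"
  shows "partial_transversal Y A (f ` I)"
  unfolding partial_transversal_def
proof (intro conjI ballI impI)
  show "f ` I \<subseteq> (\<Union>i\<in>A. Y i)" using assms(2) PiE_mem[OF assms(3)] by blast
  fix i x y assume "i \<in> A" "x \<in> f ` I" "y \<in> f ` I" "x \<in> Y i" "y \<in> Y i"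
  then obtain a b where "a \<in> I" "b \<in> I" "x = f a" "y = f b" "f a \<in> Y i" "f b \<in> Y i" by blast
  moreover have "f a \<in> Y a" "f b \<in> Y b" using PiE_mem[OF assms(3)] \<open>a \<in> I\<close> \<open>b \<in> I\<close> by auto
  ultimately have "a = i" "b = i"
    using disjoint_family_on_index_unique[OF assms(1)] assms(2) \<open>i \<in> A\<close> by (metis subsetD)+
  then show "x = y" using \<open>x = f a\<close> \<open>y = f b\<close> by simp
qed

lemma partial_transversal_obtain_section:
  assumes "partial_transversal Y A S"
  obtains I f where "I \<subseteq> A" "f \<in> PiE I Y" "f ` I = S"
proof -
  define I where "I = {i\<in>A. Y i \<inter> S \<noteq> {}}"
  define f where "f = (\<lambda>i\<in>I. SOME x. x \<in> Y i \<inter> S)"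
  have f: "f i \<in> Y i \<inter> S" if "i \<in> I" for i
    using that someI_ex[of "\<lambda>x. x \<in> Y i \<inter> S"] by (auto simp: f_def I_def)
  have "S \<subseteq> f ` I"
  proof
    fix x assume "x \<in> S"
    then obtain i where i: "i \<in> A" "x \<in> Y i" using assms by (auto simp: partial_transversal_def)
    then have "i \<in> I" using \<open>x \<in> S\<close> by (auto simp: I_def)
    then have "f i = x" using f assms i \<open>x \<in> S\<close> by (auto simp: partial_transversal_def)
    then show "x \<in> f ` I" using \<open>i \<in> I\<close> by blast
  qed
  then have "f ` I = S" using f by blast
  moreover have "I \<subseteq> A" "f \<in> PiE I Y" using f by (auto simp: I_def f_def)
  ultimately show ?thesis using that by blast
qed

lemma inj_on_image_sections:
  assumes "disjoint_family_on Y A"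
  shows "inj_on (\<lambda>(I, f). f ` I) (SIGMA I:Pow A. PiE I Y)"
proof -
  have recover: "i \<in> I' \<and> f' i = f i"
    if sub: "I \<subseteq> A" "I' \<subseteq> A" and sections: "f \<in> PiE I Y" "f' \<in> PiE I' Y"
      and eq: "f ` I = f' ` I'" and i: "i \<in> I"
    for I f I' f' i
  proof -
    obtain j where j: "j \<in> I'" "f i = f' j" using eq i by (metis imageE imageI)
    have "f i \<in> Y i" "f' j \<in> Y j" using PiE_mem sections i j(1) by auto
    then have "i = j"
      using disjoint_family_on_index_unique[OF assms] sub i j by (metis subsetD)
    then show ?thesis using j by simp
  qed
  show ?thesis
  proof (rule inj_onI)
    fix p q
    assume "p \<in> (SIGMA I:Pow A. PiE I Y)" "q \<in> (SIGMA I:Pow A. PiE I Y)"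
      and "(\<lambda>(I, f). f ` I) p = (\<lambda>(I, f). f ` I) q"
    moreover obtain I f I' f' where pq: "p = (I, f)" "q = (I', f')" by fastforce
    ultimately have sub: "I \<subseteq> A" "I' \<subseteq> A" and sections: "f \<in> PiE I Y" "f' \<in> PiE I' Y"
      and eq: "f ` I = f' ` I'"
      by auto
    have "I = I'"
      using recover[OF sub sections eq] recover[OF sub(2,1) sections(2,1) eq[symmetric]] by blast
    moreover have "f = f'"
      using sections \<open>I = I'\<close> recover[OF sub sections eq] by (intro PiE_ext[of f I Y]) auto
    ultimately show "p = q" using pq by simp
  qed
qed

lemma image_sections_eq_partial_transversals:
  assumes disjoint: "disjoint_family_on Y A"
  shows "(\<lambda>(I, f). f ` I) ` (SIGMA I:{I. I \<subseteq> A \<and> card I = m}. PiE I Y)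
       = {S. partial_transversal Y A S \<and> card S = m}"
proof (intro equalityI subsetI)
  fix S assume "S \<in> (\<lambda>(I, f). f ` I) ` (SIGMA I:{I. I \<subseteq> A \<and> card I = m}. PiE I Y)"
  then obtain I f where I: "I \<subseteq> A" "card I = m" "f \<in> PiE I Y" and S: "S = f ` I"
    by auto
  show "S \<in> {S. partial_transversal Y A S \<and> card S = m}"
    using partial_transversal_image_section[OF disjoint I(1,3)]
      card_image[OF inj_on_section[OF disjoint I(1,3)]] I(2) S by simp
next
  fix S assume "S \<in> {S. partial_transversal Y A S \<and> card S = m}"
  then have S: "partial_transversal Y A S" "card S = m" by simp_all
  obtain I f where I: "I \<subseteq> A" "f \<in> PiE I Y" "f ` I = S"
    using partial_transversal_obtain_section[OF S(1)] by blast
  have "card I = m"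
    using card_image[OF inj_on_section[OF disjoint I(1,2)]] I(3) S(2) by simp
  then show "S \<in> (\<lambda>(I, f). f ` I) ` (SIGMA I:{I. I \<subseteq> A \<and> card I = m}. PiE I Y)"
    using I by (intro image_eqI[of _ _ "(I, f)"]) auto
qed

lemma card_partial_transversals:
  assumes A: "finite A" and disjoint: "disjoint_family_on Y A"
    and blocks: "\<And>i. i \<in> A \<Longrightarrow> finite (Y i) \<and> card (Y i) = c"
  shows "card {S. partial_transversal Y A S \<and> card S = m} = (card A choose m) * c ^ m"
proof -
  let ?Sigma = "SIGMA I:{I. I \<subseteq> A \<and> card I = m}. PiE I Y"
  \<comment> \<open>choose m blocks and one element in each of them\<close>
  have "inj_on (\<lambda>(I, f). f ` I) ?Sigma"
    by (rule inj_on_subset[OF inj_on_image_sections[OF disjoint]]) auto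
  then have "bij_betw (\<lambda>(I, f). f ` I) ?Sigma {S. partial_transversal Y A S \<and> card S = m}"
    using image_sections_eq_partial_transversals[OF disjoint] by (simp add: bij_betw_def)
  then have "card {S. partial_transversal Y A S \<and> card S = m} = card ?Sigma"
    by (simp add: bij_betw_same_card)
  also have "\<dots> = (\<Sum>I\<in>{I. I \<subseteq> A \<and> card I = m}. card (PiE I Y))"
    using A blocks by (intro card_SigmaI) (auto intro!: finite_PiE dest: finite_subset)
  also have "\<dots> = (\<Sum>I\<in>{I. I \<subseteq> A \<and> card I = m}. c ^ m)"
  proof (rule sum.cong[OF refl])
    fix I assume I: "I \<in> {I. I \<subseteq> A \<and> card I = m}"
    then have "card (PiE I Y) = (\<Prod>i\<in>I. card (Y i))"
      using A finite_subset by (intro card_PiE) blast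
    also have "\<dots> = (\<Prod>i\<in>I. c)" using I blocks by (intro prod.cong) auto
    finally show "card (PiE I Y) = c ^ m" using I by simp
  qed
  also have "\<dots> = (card A choose m) * c ^ m"
    using A by (simp add: n_subsets)
  finally show ?thesis .
qed

section \<open>All 2k-sets are generated by equally many partitions\<close>

lemma card_subsets_generated_by:
  assumes "Y \<in> ordered_partitions l"
  shows "card {S \<in> subsets_2k l k. generated_by l Y S} = ((l+1) choose (2*k)) * l ^ (2*k)"
proof -
  have "{S \<in> subsets_2k l k. generated_by l Y S}
      = {S. partial_transversal Y {..<l+1} S \<and> card S = 2*k}"
    using ordered_partition_Union[OF assms]
    by (auto simp: subsets_2k_def generated_by_def partial_transversal_def)
  also have "card \<dots> = ((l+1) choose (2*k)) * l ^ (2*k)"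
    using ordered_partition_disjoint[OF assms] ordered_partition_card[OF assms]
      finite_subset[OF ordered_partition_subset[OF assms]]
    by (subst card_partial_transversals) auto
  finally show ?thesis .
qed

lemma relabel_ordered_partition:
  assumes h: "bij_betw h {1..l*(l+1)} {1..l*(l+1)}" and Y: "Y \<in> ordered_partitions l"
  shows "(\<lambda>i. h ` Y i) \<in> ordered_partitions l"
proof -
  have inj: "inj_on h (Y i)" for i
    using bij_betw_imp_inj_on[OF h] ordered_partition_subset[OF Y] by (rule inj_on_subset)
  have "h ` Y i \<inter> h ` Y j = {}" if "i < l+1" "j < l+1" "i \<noteq> j" for i j
    using inj_on_image_Int[OF bij_betw_imp_inj_on[OF h] ordered_partition_subset[OF Y]
        ordered_partition_subset[OF Y], of i j] ordered_partition_disjoint[OF Y] that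
    by (simp add: disjoint_family_on_def)
  moreover have "(\<Union>i<l+1. h ` Y i) = {1..l*(l+1)}"
    using ordered_partition_Union[OF Y] bij_betw_imp_surj_on[OF h] by (metis image_UN)
  ultimately show ?thesis
    using Y card_image[OF inj] by (simp add: ordered_partitions_def)
qed

lemma generated_by_relabel:
  assumes h: "inj_on h {1..l*(l+1)}" and Y: "Y \<in> ordered_partitions l"
    and S: "S \<subseteq> {1..l*(l+1)}" and gen: "generated_by l Y S"
  shows "generated_by l (\<lambda>i. h ` Y i) (h ` S)"
  unfolding generated_by_def
proof (intro allI impI ballI)
  fix i x y assume i: "i < l+1" and xy: "x \<in> h ` S" "y \<in> h ` S" "x \<in> h ` Y i" "y \<in> h ` Y i"
  have preimage: "\<exists>a\<in>S \<inter> Y i. z = h a" if z: "z \<in> h ` S" "z \<in> h ` Y i" for z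
  proof -
    obtain a b where "a \<in> S" "b \<in> Y i" "z = h a" "z = h b" using z by blast
    moreover have "b \<in> {1..l*(l+1)}" using ordered_partition_subset[OF Y] \<open>b \<in> Y i\<close> by blast
    ultimately have "a = b" using inj_onD[OF h] S by blast
    then show ?thesis using \<open>a \<in> S\<close> \<open>b \<in> Y i\<close> \<open>z = h a\<close> by blast
  qed
  then show "x = y" using preimage[OF xy(1,3)] preimage[OF xy(2,4)] gen i
    by (auto simp: generated_by_def)
qed

lemma ex_bij_betw_extend:
  assumes G: "finite G" and S: "S \<subseteq> G" "S' \<subseteq> G" and card: "card S = card S'"
  shows "\<exists>h. bij_betw h G G \<and> h ` S = S'"
proof -
  obtain f where f: "bij_betw f S S'"
    using finite_same_card_bij[OF finite_subset[OF S(1) G] finite_subset[OF S(2) G] card] by blast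
  have "card (G - S) = card (G - S')"
    using G S card by (simp add: card_Diff_subset finite_subset)
  then obtain g where g: "bij_betw g (G - S) (G - S')"
    using finite_same_card_bij[of "G - S" "G - S'"] G by blast
  define h where "h x = (if x \<in> S then f x else g x)" for x
  have "bij_betw h S S'"
    using f by (rule bij_betw_cong[THEN iffD1, rotated]) (simp add: h_def)
  moreover have "bij_betw h (G - S) (G - S')"
    using g by (rule bij_betw_cong[THEN iffD1, rotated]) (simp add: h_def)
  ultimately have "bij_betw h (S \<union> (G - S)) (S' \<union> (G - S'))"
    by (rule bij_betw_combine) blast
  then have "bij_betw h G G" using S by (simp add: Un_absorb1)
  then show ?thesis using \<open>bij_betw h S S'\<close> bij_betw_imp_surj_on by blast
qed

lemma card_generating_partitions_mono:
  assumes S: "S \<subseteq> {1..l*(l+1)}" "S' \<subseteq> {1..l*(l+1)}" and card: "card S = card S'"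
  shows "card {Y \<in> ordered_partitions l. generated_by l Y S}
       \<le> card {Y \<in> ordered_partitions l. generated_by l Y S'}"
proof -
  obtain h where h: "bij_betw h {1..l*(l+1)} {1..l*(l+1)}" "h ` S = S'"
    using ex_bij_betw_extend[OF finite_atLeastAtMost S card] by blast
  let ?relabel = "\<lambda>Y i. h ` Y i"
  have inj: "inj_on ?relabel (ordered_partitions l)"
  proof (rule inj_onI)
    fix Y Z assume YZ: "Y \<in> ordered_partitions l" "Z \<in> ordered_partitions l" "?relabel Y = ?relabel Z"
    show "Y = Z"
    proof
      fix i
      have "h ` Y i = h ` Z i" using fun_cong[OF YZ(3), of i] by simp
      then show "Y i = Z i"
        using inj_on_image_eq_iff[OF bij_betw_imp_inj_on[OF h(1)]
            ordered_partition_subset[OF YZ(1)] ordered_partition_subset[OF YZ(2)]] by simp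
    qed
  qed
  have image: "?relabel ` {Y \<in> ordered_partitions l. generated_by l Y S}
      \<subseteq> {Y \<in> ordered_partitions l. generated_by l Y S'}"
  proof (rule image_subsetI)
    fix Y assume "Y \<in> {Y \<in> ordered_partitions l. generated_by l Y S}"
    then have Y: "Y \<in> ordered_partitions l" and gen: "generated_by l Y S" by simp_all
    have "generated_by l (?relabel Y) S'"
      using generated_by_relabel[OF bij_betw_imp_inj_on[OF h(1)] Y S(1) gen] h(2) by simp
    then show "?relabel Y \<in> {Y \<in> ordered_partitions l. generated_by l Y S'}"
      using relabel_ordered_partition[OF h(1) Y] by simp
  qed
  have "finite {Y \<in> ordered_partitions l. generated_by l Y S'}"
    using finite_ordered_partitions by simp
  then show ?thesis
    using card_inj_on_le[OF inj_on_subset[OF inj] image] by simp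
qed

lemma card_generating_partitions_eq:
  assumes "S \<in> subsets_2k l k" "S' \<in> subsets_2k l k"
  shows "card {Y \<in> ordered_partitions l. generated_by l Y S}
       = card {Y \<in> ordered_partitions l. generated_by l Y S'}"
  using assms card_generating_partitions_mono[of S l S'] card_generating_partitions_mono[of S' l S]
  by (simp add: subsets_2k_def)

lemma sum_card_filter_swap:
  assumes "finite A" "finite B"
  shows "(\<Sum>a\<in>A. card {b \<in> B. R a b}) = (\<Sum>b\<in>B. card {a \<in> A. R a b})"
proof -
  have "(\<Sum>a\<in>A. card {b \<in> B. R a b}) = (\<Sum>a\<in>A. \<Sum>b\<in>B. of_bool (R a b))"
    using assms by (simp add: Int_def conj_commute)
  also have "\<dots> = (\<Sum>b\<in>B. \<Sum>a\<in>A. of_bool (R a b))"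
    by (rule sum.swap)
  also have "\<dots> = (\<Sum>b\<in>B. card {a \<in> A. R a b})"
    using assms by (simp add: Int_def conj_commute)
  finally show ?thesis .
qed

lemma finite_subsets_2k: "finite (subsets_2k l k)"
  unfolding subsets_2k_def by (rule finite_subset[of _ "Pow {1..l*(l+1)}"]) auto

lemma card_subsets_2k: "card (subsets_2k l k) = (l*(l+1)) choose (2*k)"
  unfolding subsets_2k_def using n_subsets[of "{1..l*(l+1)}" "2*k"] by simp

lemma card_generating_partitions:
  assumes S: "S \<in> subsets_2k l k"
  shows "card {Y \<in> ordered_partitions l. generated_by l Y S} * ((l*(l+1)) choose (2*k))
       = card (ordered_partitions l) * (((l+1) choose (2*k)) * l ^ (2*k))"
proof -
  have "card {Y \<in> ordered_partitions l. generated_by l Y S} * card (subsets_2k l k)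
      = (\<Sum>S'\<in>subsets_2k l k. card {Y \<in> ordered_partitions l. generated_by l Y S})"
    by simp
  also have "\<dots> = (\<Sum>S'\<in>subsets_2k l k. card {Y \<in> ordered_partitions l. generated_by l Y S'})"
    using card_generating_partitions_eq[OF S] by (intro sum.cong) auto
  also have "\<dots> = (\<Sum>Y\<in>ordered_partitions l. card {S' \<in> subsets_2k l k. generated_by l Y S'})"
    by (rule sum_card_filter_swap[OF finite_subsets_2k finite_ordered_partitions])
  also have "\<dots> = card (ordered_partitions l) * (((l+1) choose (2*k)) * l ^ (2*k))"
    by (simp add: card_subsets_generated_by)
  finally show ?thesis by (simp add: card_subsets_2k)
qed

section \<open>The union bound\<close>

lemma measure_not_generated_by:
  assumes S: "S \<in> subsets_2k l k"
  shows "measure_pmf.prob (pmf_of_set (ordered_partitions l)) {Y. \<not> generated_by l Y S} = P_single l k"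
proof -
  let ?OP = "ordered_partitions l"
  let ?c = "card {Y \<in> ?OP. generated_by l Y S}" and ?C = "(l*(l+1)) choose (2*k)"
  have "card (subsets_2k l k) > 0"
    using S finite_subsets_2k by (auto simp: card_gt_0_iff)
  then have C: "real ?C > 0" by (simp add: card_subsets_2k)
  have OP: "real (card ?OP) > 0"
    using finite_ordered_partitions ordered_partitions_nonempty by (simp add: card_gt_0_iff)
  have "measure_pmf.prob (pmf_of_set ?OP) {Y. \<not> generated_by l Y S}
      = measure_pmf.prob (pmf_of_set ?OP) (space (pmf_of_set ?OP) - {Y. generated_by l Y S})"
    by (rule arg_cong[where f = "measure_pmf.prob _"]) auto
  also have "\<dots> = 1 - measure_pmf.prob (pmf_of_set ?OP) {Y. generated_by l Y S}"
    by (rule measure_pmf.prob_compl) simp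
  also have "measure_pmf.prob (pmf_of_set ?OP) {Y. generated_by l Y S} = ?c / card ?OP"
  proof -
    have "{Y \<in> ?OP. generated_by l Y S} = ?OP \<inter> {Y. generated_by l Y S}" by blast
    then show ?thesis
      by (simp only: measure_pmf_of_set[OF ordered_partitions_nonempty finite_ordered_partitions])
  qed
  also have "\<dots> = real l ^ (2*k) * real ((l+1) choose (2*k)) / ?C"
  proof -
    have "real ?c * real ?C = real (card ?OP) * (real ((l+1) choose (2*k)) * real l ^ (2*k))"
      using arg_cong[OF card_generating_partitions[OF S], of real] by simp
    then show ?thesis using C OP by (simp add: field_simps)
  qed
  finally show ?thesis by (simp add: P_single_def)
qed

lemma measure_generated_by_none:
  assumes "S \<in> subsets_2k l k"
  shows "measure_pmf.prob (partitions_pmf l N) {Ys. \<forall>j<N. \<not> generated_by l (Ys j) S}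
       = P_single l k ^ N"
proof -
  have "{Ys. \<forall>j<N. \<not> generated_by l (Ys j) S} = Pi {..<N} (\<lambda>_. {Y. \<not> generated_by l Y S})"
    by (auto simp: Pi_def)
  then show ?thesis
    by (simp add: partitions_pmf_def measure_Pi_pmf_Pi measure_not_generated_by[OF assms])
qed

lemma P_N_le_union_bound: "P_N l k N \<le> real ((l*(l+1)) choose (2*k)) * P_single l k ^ N"
proof -
  let ?E = "\<lambda>S. {Ys. \<forall>j<N. \<not> generated_by l (Ys j) S}"
  have "P_N l k N = measure_pmf.prob (partitions_pmf l N) (\<Union>S\<in>subsets_2k l k. ?E S)"
    unfolding P_N_def by (rule arg_cong[where f = "measure_pmf.prob _"]) auto
  also have "\<dots> \<le> (\<Sum>S\<in>subsets_2k l k. measure_pmf.prob (partitions_pmf l N) (?E S))"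
    by (rule measure_pmf.finite_measure_subadditive_finite) (auto simp: finite_subsets_2k)
  also have "\<dots> = (\<Sum>S\<in>subsets_2k l k. P_single l k ^ N)"
    by (intro sum.cong refl measure_generated_by_none)
  also have "\<dots> = real ((l*(l+1)) choose (2*k)) * P_single l k ^ N"
    by (simp add: card_subsets_2k)
  finally show ?thesis .
qed

lemma P_single_nonneg: "0 \<le> P_single l k"
proof (cases "subsets_2k l k = {}")
  case True
  \<comment> \<open>then the binomial coefficient vanishes and \<open>P_single l k = 1\<close> since \<open>x / 0 = 0\<close>\<close>
  then have "(l*(l+1)) choose (2*k) = 0"
    using card_subsets_2k[of l k] by simp
  then show ?thesis unfolding P_single_def by (simp only: of_nat_0 div_by_0)
next
  case False
  then obtain S where "S \<in> subsets_2k l k" by blast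
  then show ?thesis using measure_not_generated_by by (metis measure_nonneg)
qed

section \<open>Asymptotics\<close>

lemma of_nat_choose_eq_prod: "real (n choose m) = (\<Prod>i<m. real n - real i) / fact m"
proof -
  have "real (n choose m) * fact m = (\<Prod>i<m. real n - real i)"
    using gbinomial_mult_fact'[of "real n" m] by (simp add: binomial_gbinomial atLeast0LessThan)
  then show ?thesis by (simp add: field_simps)
qed

lemma P_single_eq_prod:
  "P_single l k = 1 - (\<Prod>i<2*k. real l * (real l + 1 - real i) / (real l * (real l + 1) - real i))"
proof -
  let ?L = "real l" and ?m = "2*k"
  have "?L ^ ?m * real ((l+1) choose ?m) / real ((l*(l+1)) choose ?m)
      = (\<Prod>i<?m. ?L) * (\<Prod>i<?m. ?L + 1 - real i) / (\<Prod>i<?m. ?L * (?L + 1) - real i)"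
    by (simp add: of_nat_choose_eq_prod field_simps)
  also have "\<dots> = (\<Prod>i<?m. ?L * (?L + 1 - real i) / (?L * (?L + 1) - real i))"
    by (simp add: prod.distrib prod_dividef)
  finally show ?thesis by (simp add: P_single_def)
qed

lemma P_single_le:
  assumes l: "0 < l" "2*k \<le> l"
  shows "P_single l k \<le> real (2*k) ^ 2 / real l"
proof -
  let ?L = "real l" and ?m = "2*k"
  let ?x = "real ?m / ?L"
  have L: "0 < ?L" "?L + 1 \<noteq> 0" using l by simp_all
  have x: "0 \<le> ?x" "?x \<le> 1" using l by auto
  have factor: "1 - ?x \<le> ?L * (?L + 1 - real i) / (?L * (?L + 1) - real i)" if "i < ?m" for i
  proof -
    have i: "real i \<le> ?L" using that l by simp
    have "1 - ?x \<le> 1 - real i / (?L + 1)"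
      using that l by (simp add: frac_le)
    also have "\<dots> = (?L + 1 - real i) / (?L + 1)"
      using L(2) by (simp add: diff_divide_distrib)
    also have "\<dots> = ?L * (?L + 1 - real i) / (?L * (?L + 1))"
      using L(1) by simp
    also have "\<dots> \<le> ?L * (?L + 1 - real i) / (?L * (?L + 1) - real i)"
    proof (rule divide_left_mono)
      have "0 < ?L * ?L" using L(1) by simp
      then have "real i < ?L * (?L + 1)"
        unfolding distrib_left using i by linarith
      then show "0 < ?L * (?L + 1) * (?L * (?L + 1) - real i)"
        using L(1) by simp
      show "0 \<le> ?L * (?L + 1 - real i)" using i L(1) by simp
    qed simp
    finally show ?thesis .
  qed
  have "1 - real ?m * ?x \<le> (1 - ?x) ^ ?m"
    using Bernoulli_inequality[of "- ?x" ?m] x by simp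
  also have "\<dots> = (\<Prod>i<?m. 1 - ?x)" by simp
  also have "\<dots> \<le> (\<Prod>i<?m. ?L * (?L + 1 - real i) / (?L * (?L + 1) - real i))"
    using factor x by (intro prod_mono) auto
  finally show ?thesis
    by (simp add: P_single_eq_prod power2_eq_square)
qed

lemma P_N_le_powr:
  assumes l: "0 < l" "2*k \<le> l"
  shows "P_N l k N \<le> 4 ^ k * real (2*k) ^ (2*N) * real l powr (real (4*k) - real N)"
proof -
  let ?L = "real l" and ?m = "2*k"
  have "(l*(l+1)) choose ?m \<le> (l*(l+1)) ^ ?m"
    using l by (intro binomial_le_pow order_trans[OF l(2)]) simp
  also have "\<dots> \<le> (2 * l^2) ^ ?m"
    by (intro power_mono) (simp_all add: power2_eq_square)
  finally have "real ((l*(l+1)) choose ?m) \<le> real ((2 * l^2) ^ ?m)"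
    by (simp only: of_nat_le_iff)
  also have "\<dots> = (2 * ?L^2) ^ ?m"
    by simp
  also have "\<dots> = 4 ^ k * ?L ^ (4*k)"
  proof -
    have "(2::real) ^ ?m = 4 ^ k" by (simp add: power_mult)
    then show ?thesis by (simp add: power_mult_distrib flip: power_mult)
  qed
  finally have C: "real ((l*(l+1)) choose ?m) \<le> 4 ^ k * ?L ^ (4*k)" .
  have "P_N l k N \<le> real ((l*(l+1)) choose ?m) * P_single l k ^ N"
    by (rule P_N_le_union_bound)
  also have "\<dots> \<le> (4 ^ k * ?L ^ (4*k)) * (real ?m ^ 2 / ?L) ^ N"
    using C P_single_le[OF l] P_single_nonneg by (intro mult_mono power_mono) auto
  also have "\<dots> = 4 ^ k * real ?m ^ (2*N) * (?L ^ (4*k) / ?L ^ N)"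
    by (simp add: power_divide power_mult)
  also have "?L ^ (4*k) / ?L ^ N = ?L powr (real (4*k) - real N)"
    using l by (simp only: powr_diff powr_realpow of_nat_0_less_iff)
  finally show ?thesis .
qed

theorem mainTheorem10:
  fixes k N :: nat
  assumes "k \<ge> 1" and "N \<ge> 1"
  shows "(\<forall>l\<ge>1. 2*k \<le> l+1 \<longrightarrow>
            P_N l k N \<le> real ((l*(l+1)) choose (2*k)) * P_single l k ^ N)
       \<and> (\<lambda>l. P_N l k N) \<in> O(\<lambda>l. real l powr (real (4*k) - real N))
       \<and> (N > 4*k \<longrightarrow> (\<lambda>l. P_N l k N) \<longlonglongrightarrow> 0)"
proof -
  define K where "K = 4 ^ k * real (2*k) ^ (2*N)"
  have bound: "\<forall>\<^sub>F l in sequentially. P_N l k N \<le> K * real l powr (real (4*k) - real N)"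
  proof (rule eventually_mono[OF eventually_ge_at_top])
    fix l assume "2*k \<le> l"
    then show "P_N l k N \<le> K * real l powr (real (4*k) - real N)"
      unfolding K_def using assms(1) by (intro P_N_le_powr) auto
  qed
  have nonneg: "0 \<le> P_N l k N" for l
    by (simp add: P_N_def)
  have "(\<lambda>l. P_N l k N) \<in> O(\<lambda>l. real l powr (real (4*k) - real N))"
    using bound nonneg by (intro bigoI[of _ K]) (auto elim!: eventually_mono)
  moreover have "(\<lambda>l. P_N l k N) \<longlonglongrightarrow> 0" if "N > 4*k"
  proof (rule tendsto_sandwich[OF _ bound tendsto_const])
    show "\<forall>\<^sub>F l in sequentially. 0 \<le> P_N l k N" using nonneg by simp
    have "(\<lambda>l. real l powr (real (4*k) - real N)) \<longlonglongrightarrow> 0"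
      using that by (intro tendsto_neg_powr filterlim_real_sequentially) simp
    then show "(\<lambda>l. K * real l powr (real (4*k) - real N)) \<longlonglongrightarrow> 0"
      by (rule tendsto_mult_right_zero)
  qed
  ultimately show ?thesis
    using P_N_le_union_bound by blast
qed

end
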